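(* Let $T$ be a string of length $n$, let $1 \le i \le j \le n$, let $T[i..t]$ be the longest palindromic prefix and $T[s..j]$ the longest palindromic suffix of $T[i..j]$. Let $L$ be the maximum length of a maximal palindrome $T[p..q]$ of $T$ whose center $c = \frac{p+q}{2}$ satisfies $\frac{i+t}{2} < c < \frac{s+j}{2}$ (with $L = 0$ if no such center exists). Then the length of a longest palindromic substring of $T[i..j]$ equals $\max\{\,t-i+1,\; j-s+1,\; L\,\}$. Equivalently, defining the array $\mathsf{MP}[1..2n-1]$ by letting $\mathsf{MP}[2c-1]$ be the length of the maximal palindrome of $T$ with center $c$ for each $c \in \{1, 1.5, 2, \ldots, n-0.5, n\}$, we have $L = \max\{\mathsf{MP}[k] : i+t \le k \le s+j-2\}$ when $i+t \le s+j-2$.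
   Context: Strings are 1-indexed: $T[k]$ is the $k$-th character and $T[i..j] = T[i]\cdots T[j]$. A palindrome is a string equal to its reversal. The center of $T[p..q]$ is $\frac{p+q}{2}$. A palindromic substring $T[p..q]$ is a maximal palindrome in $T$ if $p = 1$, $q = n$, or $T[p-1] \ne T[q+1]$; for each integer or half-integer $c$ with $1 \le c \le n$ there is exactly one maximal palindrome with center $c$ (for half-integer $c$ it may be empty). The longest palindromic prefix (suffix) of $T[i..j]$ is the longest prefix (suffix) of $T[i..j]$ that is a palindrome. *)

theory Defs
  imports Main "HOL-Library.Sublist"
begin

text \<open>Strings are lists; positions are 1-indexed. sub T i j is T[i..j]
  (the empty string when j = i - 1).\<close>
definition sub :: "'a list \<Rightarrow> nat \<Rightarrow> nat \<Rightarrow> 'a list" where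
  "sub T i j = take (Suc j - i) (drop (i - 1) T)"

definition pal :: "'a list \<Rightarrow> bool" where
  "pal xs \<longleftrightarrow> rev xs = xs"

text \<open>T[p..q] (1 <= p <= q+1 <= n+1, possibly empty) is a maximal palindrome of T.
  Its center is (p+q)/2; we work with doubled centers p+q.\<close>
definition maxpal :: "'a list \<Rightarrow> nat \<Rightarrow> nat \<Rightarrow> bool" where
  "maxpal T p q \<longleftrightarrow> 1 \<le> p \<and> p \<le> Suc q \<and> q \<le> length T \<and> pal (sub T p q) \<and>
     (p = 1 \<or> q = length T \<or> T ! (p - 2) \<noteq> T ! q)"

definition lps_len :: "'a list \<Rightarrow> nat" where
  "lps_len xs = Max {length ys | ys. sublist ys xs \<and> pal ys}"

definition MP :: "'a list \<Rightarrow> nat \<Rightarrow> nat" where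
  "MP T k = (THE m. \<exists>p q. maxpal T p q \<and> p + q = k + 1 \<and> m = Suc q - p)"

end

(* Every palindromic factor T[p..q] of T[i..j] has its (doubled) center p + q either at most
   i + t, at least s + j, or strictly in between.  In the first case it is no longer than
   T[i..t], since it starts at or after i; symmetrically in the second.  In the third it
   extends concentrically to the maximal palindrome of T with the same center, and that one
   still lies inside T[i..j]: otherwise its concentric factor starting at i (ending at j)
   would be a palindromic prefix (suffix) of T[i..j] longer than T[i..t] (T[s..j]).
   The array MP merely lists maximal palindromes by doubled center, which are unique. *)

theory Submission
  imports Defs
begin

lemma pal_iff_nth: "pal xs \<longleftrightarrow> (\<forall>k<length xs. xs ! k = xs ! (length xs - Suc k))"
  unfolding pal_def by (metis length_rev nth_equalityI rev_nth)

lemma sublist_iff_take_drop: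
  "sublist ys xs \<longleftrightarrow> (\<exists>k. k + length ys \<le> length xs \<and> ys = take (length ys) (drop k xs))"
proof
  assume "sublist ys xs"
  then obtain ps ss where "xs = ps @ ys @ ss" unfolding sublist_def by blast
  then show "\<exists>k. k + length ys \<le> length xs \<and> ys = take (length ys) (drop k xs)"
    by (intro exI[of _ "length ps"]) simp
next
  assume "\<exists>k. k + length ys \<le> length xs \<and> ys = take (length ys) (drop k xs)"
  then obtain k where "ys = take (length ys) (drop k xs)" by blast
  moreover have "xs = take k xs @ take (length ys) (drop k xs) @ drop (length ys) (drop k xs)"
    by (simp only: append_take_drop_id)
  ultimately show "sublist ys xs" unfolding sublist_def by metis
qed

lemma length_sub: "1 \<le> p \<Longrightarrow> q \<le> length T \<Longrightarrow> length (sub T p q) = Suc q - p"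
  by (simp add: sub_def)

lemma nth_sub: "1 \<le> p \<Longrightarrow> q \<le> length T \<Longrightarrow> k < Suc q - p \<Longrightarrow> sub T p q ! k = T ! (p - 1 + k)"
  by (simp add: sub_def)

lemma take_drop_sub:
  assumes "1 \<le> i" "i \<le> p" "q \<le> j"
  shows "take (Suc q - p) (drop (p - i) (sub T i j)) = sub T p q"
proof -
  have "i - 1 + (p - i) = p - 1" "Suc j - i - (p - i) = Suc j - p" using assms by arith+
  moreover have "min (Suc q - p) (Suc j - p) = Suc q - p" using assms by simp
  ultimately show ?thesis unfolding sub_def by (simp add: drop_take take_take add.commute)
qed

lemma sublist_sub_iff:
  assumes "1 \<le> i" "i \<le> j" "j \<le> length T"
  shows "sublist ys (sub T i j) \<longleftrightarrow> (\<exists>p q. i \<le> p \<and> p \<le> Suc q \<and> q \<le> j \<and> ys = sub T p q)"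
proof
  assume "sublist ys (sub T i j)"
  moreover have "length (sub T i j) = Suc j - i" using assms by (simp add: length_sub)
  ultimately obtain k where k: "k + length ys \<le> Suc j - i" "ys = take (length ys) (drop k (sub T i j))"
    unfolding sublist_iff_take_drop by auto
  define p where "p = i + k"
  define q where "q = p + length ys - 1"
  have "Suc q - p = length ys" "p - i = k" "i \<le> p" "p \<le> Suc q" "q \<le> j"
    using k(1) assms unfolding p_def q_def by arith+
  moreover from this have "ys = sub T p q"
    using k(2) take_drop_sub[OF assms(1), of p q j T] by simp
  ultimately show "\<exists>p q. i \<le> p \<and> p \<le> Suc q \<and> q \<le> j \<and> ys = sub T p q" by blast
next
  assume "\<exists>p q. i \<le> p \<and> p \<le> Suc q \<and> q \<le> j \<and> ys = sub T p q"
  then obtain p q where "i \<le> p" "q \<le> j" "ys = sub T p q" by blast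
  then have "ys = take (Suc q - p) (drop (p - i) (sub T i j))"
    using take_drop_sub[OF assms(1), of p q j T] by simp
  then have "sublist ys (drop (p - i) (sub T i j))" by simp
  then show "sublist ys (sub T i j)"
    using sublist_drop by (rule sublist_order.order.trans)
qed

lemma lps_len_sub:
  assumes "1 \<le> i" "i \<le> j" "j \<le> length T"
  shows "lps_len (sub T i j) =
    Max {Suc q - p | p q. i \<le> p \<and> p \<le> Suc q \<and> q \<le> j \<and> pal (sub T p q)}"
  unfolding lps_len_def
proof (rule arg_cong[where f = Max], intro equalityI subsetI)
  fix x assume "x \<in> {length ys | ys. sublist ys (sub T i j) \<and> pal ys}"
  then obtain p q where "i \<le> p" "p \<le> Suc q" "q \<le> j" "pal (sub T p q)" "x = length (sub T p q)"
    unfolding sublist_sub_iff[OF assms] by blast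
  moreover have "length (sub T p q) = Suc q - p"
    using calculation assms by (simp add: length_sub)
  ultimately show "x \<in> {Suc q - p | p q. i \<le> p \<and> p \<le> Suc q \<and> q \<le> j \<and> pal (sub T p q)}"
    by auto
next
  fix x assume "x \<in> {Suc q - p | p q. i \<le> p \<and> p \<le> Suc q \<and> q \<le> j \<and> pal (sub T p q)}"
  then obtain p q where "i \<le> p" "p \<le> Suc q" "q \<le> j" "pal (sub T p q)" "x = Suc q - p"
    by blast
  moreover have "length (sub T p q) = Suc q - p"
    using calculation assms by (simp add: length_sub)
  moreover have "sublist (sub T p q) (sub T i j)"
    using calculation unfolding sublist_sub_iff[OF assms] by blast
  ultimately show "x \<in> {length ys | ys. sublist ys (sub T i j) \<and> pal ys}"
    by (intro CollectI exI[of _ "sub T p q"]) simp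
qed

text \<open>Palindromicity of T[p..q] stated pointwise on T, without bounds on p and q; in this
  form concentric shrinking and extension are immediate.\<close>
definition pal_range :: "'a list \<Rightarrow> nat \<Rightarrow> nat \<Rightarrow> bool" where
  "pal_range T p q \<longleftrightarrow> (\<forall>k. p \<le> k \<and> k \<le> q \<longrightarrow> T ! (k - 1) = T ! (p + q - k - 1))"

lemma pal_sub_iff_pal_range:
  assumes "1 \<le> p" "p \<le> Suc q" "q \<le> length T"
  shows "pal (sub T p q) \<longleftrightarrow> pal_range T p q"
proof -
  have sub_mirror: "sub T p q ! (Suc q - p - Suc (k - p)) = T ! (p + q - k - 1)"
    if "p \<le> k" "k \<le> q" for k
  proof -
    have "p - 1 + (Suc q - p - Suc (k - p)) = p + q - k - 1" using that assms(1) by arith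
    then show ?thesis using that assms by (simp add: nth_sub)
  qed
  have sub_k: "sub T p q ! (k - p) = T ! (k - 1)" if "p \<le> k" "k \<le> q" for k
  proof -
    have "p - 1 + (k - p) = k - 1" using that assms(1) by arith
    then show ?thesis using that assms by (simp add: nth_sub)
  qed
  have "pal (sub T p q) \<longleftrightarrow>
      (\<forall>k<Suc q - p. sub T p q ! k = sub T p q ! (Suc q - p - Suc k))"
    using assms by (simp add: pal_iff_nth length_sub)
  also have "\<dots> \<longleftrightarrow> (\<forall>k. p \<le> k \<and> k \<le> q \<longrightarrow>
      sub T p q ! (k - p) = sub T p q ! (Suc q - p - Suc (k - p)))"
  proof (intro iffI allI impI)
    fix k assume "\<forall>k<Suc q - p. sub T p q ! k = sub T p q ! (Suc q - p - Suc k)" "p \<le> k \<and> k \<le> q"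
    then show "sub T p q ! (k - p) = sub T p q ! (Suc q - p - Suc (k - p))"
      by (meson diff_less_mono le_imp_less_Suc)
  next
    fix k assume H: "\<forall>k. p \<le> k \<and> k \<le> q \<longrightarrow> sub T p q ! (k - p) = sub T p q ! (Suc q - p - Suc (k - p))"
      and "k < Suc q - p"
    then show "sub T p q ! k = sub T p q ! (Suc q - p - Suc k)"
      using H[rule_format, of "p + k"] by simp
  qed
  also have "\<dots> \<longleftrightarrow> pal_range T p q"
    unfolding pal_range_def using sub_mirror sub_k by simp
  finally show ?thesis .
qed

lemma pal_range_concentric:
  assumes "pal_range T a b" "a \<le> p" "p + q = a + b"
  shows "pal_range T p q"
  unfolding pal_range_def
proof (intro allI impI)
  fix k assume "p \<le> k \<and> k \<le> q"
  then have "a \<le> k \<and> k \<le> b" using assms(2,3) by arith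
  then show "T ! (k - 1) = T ! (p + q - k - 1)"
    using assms(1,3) unfolding pal_range_def by simp
qed

lemma pal_range_extend:
  assumes "pal_range T p q" "2 \<le> p" "T ! (p - 2) = T ! q"
  shows "pal_range T (p - 1) (Suc q)"
  unfolding pal_range_def
proof (intro allI impI)
  fix k assume k: "p - 1 \<le> k \<and> k \<le> Suc q"
  have center: "p - 1 + Suc q = p + q" using assms(2) by arith
  consider "k = p - 1" | "k = Suc q" | "p \<le> k \<and> k \<le> q" using k by arith
  then show "T ! (k - 1) = T ! (p - 1 + Suc q - k - 1)"
  proof cases
    case 1
    then have "k - 1 = p - 2" "p - 1 + Suc q - k - 1 = q" using assms(2) by arith+
    then show ?thesis using assms(3) by simp
  next
    case 2
    then have "k - 1 = q" "p - 1 + Suc q - k - 1 = p - 2" using assms(2) by arith+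
    then show ?thesis using assms(3) by simp
  next
    case 3
    then show ?thesis using assms(1) center unfolding pal_range_def by simp
  qed
qed

lemma maxpal_concentric_exists:
  "pal_range T p q \<Longrightarrow> 1 \<le> p \<Longrightarrow> p \<le> Suc q \<Longrightarrow> q \<le> length T \<Longrightarrow>
    \<exists>p' q'. maxpal T p' q' \<and> p' + q' = p + q \<and> p' \<le> p"
proof (induction p arbitrary: q rule: less_induct)
  case (less p)
  show ?case
  proof (cases "maxpal T p q")
    case True
    then show ?thesis by blast
  next
    case False
    then have "p \<noteq> 1" "q \<noteq> length T" "T ! (p - 2) = T ! q"
      using less.prems pal_sub_iff_pal_range unfolding maxpal_def by blast+
    moreover have "2 \<le> p" "Suc q \<le> length T" using less.prems \<open>p \<noteq> 1\<close> \<open>q \<noteq> length T\<close> by arith+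
    ultimately have "pal_range T (p - 1) (Suc q)"
      using pal_range_extend[OF less.prems(1)] by blast
    then obtain p' q' where "maxpal T p' q'" "p' + q' = p - 1 + Suc q" "p' \<le> p - 1"
      using less.IH[of "p - 1" "Suc q"] less.prems(3) \<open>2 \<le> p\<close> \<open>Suc q \<le> length T\<close> by fastforce
    moreover have "p - 1 + Suc q = p + q" using \<open>2 \<le> p\<close> by arith
    ultimately show ?thesis by (metis diff_le_self le_trans)
  qed
qed

lemma maxpal_exists:
  assumes "1 \<le> m" "m \<le> Suc (2 * length T)"
  shows "\<exists>p q. maxpal T p q \<and> p + q = m"
proof -
  define h where "h = m div 2"
  \<comment> \<open>T[m-h..h] is a single letter, or empty when m is odd.\<close>
  have "m - h + h - k - 1 = k - 1" if "m - h \<le> k" "k \<le> h" for k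
    using that unfolding h_def by arith
  then have "pal_range T (m - h) h"
    unfolding pal_range_def by simp
  moreover have "1 \<le> m - h" "m - h \<le> Suc h" "h \<le> length T" "m - h + h = m"
    using assms unfolding h_def by arith+
  ultimately show ?thesis using maxpal_concentric_exists by metis
qed

lemma maxpal_unique:
  assumes "maxpal T p q" "maxpal T p' q'" "p + q = p' + q'"
  shows "p = p'"
proof -
  have "\<not> p' < p" if "maxpal T p q" "maxpal T p' q'" "p + q = p' + q'" for p q p' q'
  proof
    assume "p' < p"
    then have "p' \<le> p - 1" "p - 1 \<le> q'" "p \<noteq> 1" "q \<noteq> length T"
      using that unfolding maxpal_def by arith+
    moreover have "pal_range T p' q'"
      using that(2) pal_sub_iff_pal_range unfolding maxpal_def by blast
    ultimately have "T ! (p - 1 - 1) = T ! (p' + q' - (p - 1) - 1)"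
      unfolding pal_range_def by blast
    moreover have "p - 1 - 1 = p - 2" "p' + q' - (p - 1) - 1 = q"
      using \<open>p' < p\<close> that unfolding maxpal_def by arith+
    ultimately show False
      using that(1) \<open>p \<noteq> 1\<close> \<open>q \<noteq> length T\<close> unfolding maxpal_def by simp
  qed
  then show ?thesis using assms by (metis linorder_neqE_nat)
qed

lemma MP_maxpal:
  assumes "maxpal T p q"
  shows "MP T (p + q - 1) = Suc q - p"
proof -
  have center: "p + q - 1 + 1 = p + q" using assms unfolding maxpal_def by arith
  show ?thesis
    unfolding MP_def center
  proof (rule the_equality)
    fix m assume "\<exists>p' q'. maxpal T p' q' \<and> p' + q' = p + q \<and> m = Suc q' - p'"
    then show "m = Suc q - p" using maxpal_unique[OF assms] by (metis add_left_cancel)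
  qed (use assms in blast)
qed

definition maxpal_lengths :: "'a list \<Rightarrow> nat \<Rightarrow> nat \<Rightarrow> nat set" where
  "maxpal_lengths T lo hi = {Suc q - p | p q. maxpal T p q \<and> lo < p + q \<and> p + q < hi}"

lemma finite_maxpal_lengths: "finite (maxpal_lengths T lo hi)"
proof (rule finite_subset)
  show "maxpal_lengths T lo hi \<subseteq> {..Suc (length T)}"
    unfolding maxpal_lengths_def maxpal_def by auto
qed simp

lemma MP_image_eq_maxpal_lengths:
  assumes "2 \<le> hi" "hi \<le> 2 * length T + 2"
  shows "MP T ` {lo .. hi - 2} = maxpal_lengths T lo hi"
proof
  show "MP T ` {lo .. hi - 2} \<subseteq> maxpal_lengths T lo hi"
  proof
    fix x assume "x \<in> MP T ` {lo .. hi - 2}"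
    then obtain k where k: "x = MP T k" "lo \<le> k" "k \<le> hi - 2" by auto
    have "Suc k \<le> Suc (2 * length T)" using k assms by arith
    then obtain p q where pq: "maxpal T p q" "p + q = Suc k"
      using maxpal_exists[of "Suc k" T] by auto
    then have "x = Suc q - p" using k MP_maxpal[OF pq(1)] by simp
    then show "x \<in> maxpal_lengths T lo hi"
      unfolding maxpal_lengths_def using pq k assms by fastforce
  qed
next
  show "maxpal_lengths T lo hi \<subseteq> MP T ` {lo .. hi - 2}"
  proof
    fix x assume "x \<in> maxpal_lengths T lo hi"
    then obtain p q where pq: "x = Suc q - p" "maxpal T p q" "lo < p + q" "p + q < hi"
      unfolding maxpal_lengths_def by blast
    then have "p + q - 1 \<in> {lo .. hi - 2}" by auto
    then show "x \<in> MP T ` {lo .. hi - 2}" using MP_maxpal[OF pq(2)] pq(1) by force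
  qed
qed

lemma pal_range_inside:
  assumes "1 \<le> i" "j \<le> length T" "i \<le> t" "s \<le> j"
    and prefix_longest: "\<forall>t'. t < t' \<and> t' \<le> j \<longrightarrow> \<not> pal (sub T i t')"
    and suffix_longest: "\<forall>s'. i \<le> s' \<and> s' < s \<longrightarrow> \<not> pal (sub T s' j)"
    and pal: "pal_range T a b" and center: "i + t < a + b" "a + b < s + j"
  shows "i \<le> a \<and> b \<le> j"
proof (rule ccontr)
  assume outside: "\<not> (i \<le> a \<and> b \<le> j)"
  show False
  proof (cases "a + b \<le> i + j")
    case True
    define t' where "t' = a + b - i"
    have "a \<le> i" "i + t' = a + b" "t < t'" "t' \<le> j"
      using outside True center unfolding t'_def by arith+
    then have "pal_range T i t'"
      using pal_range_concentric[OF pal] by blast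
    moreover have "i \<le> Suc t'" "t' \<le> length T" using \<open>t < t'\<close> \<open>t' \<le> j\<close> assms by arith+
    ultimately have "pal (sub T i t')" using pal_sub_iff_pal_range assms(1) by blast
    then show False using prefix_longest \<open>t < t'\<close> \<open>t' \<le> j\<close> by blast
  next
    case False
    define s' where "s' = a + b - j"
    have "a \<le> s'" "s' + j = a + b" "i \<le> s'" "s' < s"
      using outside False center unfolding s'_def by arith+
    then have "pal_range T s' j"
      using pal_range_concentric[OF pal] by blast
    moreover have "1 \<le> s'" "s' \<le> Suc j" using \<open>i \<le> s'\<close> \<open>s' < s\<close> assms by arith+
    ultimately have "pal (sub T s' j)" using pal_sub_iff_pal_range assms(2) by blast
    then show False using suffix_longest \<open>i \<le> s'\<close> \<open>s' < s\<close> by blast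
  qed
qed

lemma pal_factor_length_le:
  assumes "1 \<le> i" "j \<le> length T" "i \<le> p" "p \<le> Suc q" "q \<le> j" "pal (sub T p q)"
  shows "Suc q - p \<le> max (Suc t - i) (max (Suc j - s) (Max (maxpal_lengths T (i + t) (s + j) \<union> {0})))"
proof -
  consider "p + q \<le> i + t" | "s + j \<le> p + q" | "i + t < p + q" "p + q < s + j" by arith
  then show ?thesis
  proof cases
    case 1
    then show ?thesis using assms(3,4) by arith
  next
    case 2
    then show ?thesis using assms(4,5) by arith
  next
    case 3
    have bounds: "1 \<le> p" "q \<le> length T" using assms by arith+
    then have "pal_range T p q" using assms(4,6) pal_sub_iff_pal_range by blast
    then obtain p' q' where "maxpal T p' q'" "p' + q' = p + q" "p' \<le> p"
      using maxpal_concentric_exists bounds assms(4) by blast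
    moreover have "i + t < p' + q'" "p' + q' < s + j" using 3 \<open>p' + q' = p + q\<close> by simp_all
    ultimately have "Suc q' - p' \<in> maxpal_lengths T (i + t) (s + j) \<union> {0}"
      unfolding maxpal_lengths_def by blast
    then have "Suc q' - p' \<le> Max (maxpal_lengths T (i + t) (s + j) \<union> {0})"
      using finite_maxpal_lengths by (intro Max_ge) auto
    moreover have "Suc q - p \<le> Suc q' - p'" using \<open>p' + q' = p + q\<close> \<open>p' \<le> p\<close> by arith
    ultimately show ?thesis by simp
  qed
qed

lemma lps_len_sub_eq:
  assumes "1 \<le> i" "i \<le> j" "j \<le> length T"
    and "i \<le> t" "t \<le> j" "pal (sub T i t)"
    and prefix_longest: "\<forall>t'. t < t' \<and> t' \<le> j \<longrightarrow> \<not> pal (sub T i t')"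
    and "i \<le> s" "s \<le> j" "pal (sub T s j)"
    and suffix_longest: "\<forall>s'. i \<le> s' \<and> s' < s \<longrightarrow> \<not> pal (sub T s' j)"
  shows "lps_len (sub T i j) =
    max (Suc t - i) (max (Suc j - s) (Max (maxpal_lengths T (i + t) (s + j) \<union> {0})))"
    (is "_ = ?M")
proof -
  define F where "F = {Suc q - p | p q. i \<le> p \<and> p \<le> Suc q \<and> q \<le> j \<and> pal (sub T p q)}"
  let ?A = "maxpal_lengths T (i + t) (s + j)"
  have "finite F"
    unfolding F_def by (rule finite_subset[of _ "{..Suc j}"]) auto
  have upper: "\<forall>x \<in> F. x \<le> ?M"
    unfolding F_def using pal_factor_length_le[OF assms(1,3)] by blast
  have "x \<in> F" if x: "x \<in> ?A" for x
  proof -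
    obtain p q where pq: "x = Suc q - p" "maxpal T p q" "i + t < p + q" "p + q < s + j"
      using x unfolding maxpal_lengths_def by blast
    then have "pal_range T p q" "p \<le> Suc q" "pal (sub T p q)"
      using pal_sub_iff_pal_range unfolding maxpal_def by blast+
    moreover have "i \<le> p \<and> q \<le> j"
      using pal_range_inside[OF assms(1,3,4,9) prefix_longest suffix_longest] pq(3,4) calculation(1)
      by blast
    ultimately show ?thesis using pq(1) unfolding F_def by blast
  qed
  moreover have "Max (?A \<union> {0}) \<in> ?A \<union> {0}"
    using finite_maxpal_lengths by (intro Max_in) auto
  moreover have "?M = Suc t - i \<or> ?M = Suc j - s \<or> ?M = Max (?A \<union> {0}) \<and> Max (?A \<union> {0}) \<noteq> 0"
    unfolding max_def by auto
  moreover have "Suc t - i \<in> F" "Suc j - s \<in> F" using assms unfolding F_def by auto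
  ultimately have "?M \<in> F" by auto
  have "lps_len (sub T i j) = Max F"
    unfolding F_def by (rule lps_len_sub[OF assms(1-3)])
  also have "\<dots> = ?M"
    using \<open>finite F\<close> upper \<open>?M \<in> F\<close> by (intro Max_eqI) auto
  finally show ?thesis .
qed

theorem mainTheorem5:
  fixes T :: "'a list" and i j t s L :: nat
  assumes "1 \<le> i" "i \<le> j" "j \<le> length T"
    and "i \<le> t" "t \<le> j" "pal (sub T i t)"
    and "\<forall>t'. t < t' \<and> t' \<le> j \<longrightarrow> \<not> pal (sub T i t')"
    and "i \<le> s" "s \<le> j" "pal (sub T s j)"
    and "\<forall>s'. i \<le> s' \<and> s' < s \<longrightarrow> \<not> pal (sub T s' j)"
    and "L = Max ({Suc q - p | p q. maxpal T p q \<and> i + t < p + q \<and> p + q < s + j} \<union> {0})"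
  shows "lps_len (sub T i j) = max (Suc t - i) (max (Suc j - s) L)
         \<and> (i + t \<le> s + j - 2 \<longrightarrow> L = Max (MP T ` {i + t .. s + j - 2}))"
proof -
  have L: "L = Max (maxpal_lengths T (i + t) (s + j) \<union> {0})"
    using assms(12) unfolding maxpal_lengths_def .
  have "lps_len (sub T i j) = max (Suc t - i) (max (Suc j - s) L)"
    unfolding L by (rule lps_len_sub_eq[OF assms(1-11)])
  moreover have "L = Max (MP T ` {i + t .. s + j - 2})" if "i + t \<le> s + j - 2"
  proof -
    have MP_image: "MP T ` {i + t .. s + j - 2} = maxpal_lengths T (i + t) (s + j)"
      using assms(1,3,8,9) by (intro MP_image_eq_maxpal_lengths) arith+
    then have "maxpal_lengths T (i + t) (s + j) \<noteq> {}" using that by auto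
    then show ?thesis
      unfolding L MP_image by (simp add: finite_maxpal_lengths Max_insert)
  qed
  ultimately show ?thesis by blast
qed

end
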